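(* Let $n\ge 1$, $\theta^*\in\mathbb{R}^n$, and let $\phi:\mathbb{R}_{\ge0}\to\mathbb{R}^n$ be piecewise continuous and persistently exciting: there exist $M>0$, $T>0$, $\delta>0$ with $|\phi(t)|\le M$ for all $t\ge0$ and $\int_t^{t+T}\phi(s)\phi^T(s)\,ds\ge \delta I_n$ for all $t\ge 0$. Let $\beta,\gamma,\mu>0$ with $\beta\ge 2\gamma/\mu$, and set $\mathcal{N}_t:=1+\mu\,\phi^T(t)\phi(t)$. Consider the system in $x=(\theta,\vartheta)\in\mathbb{R}^n\times\mathbb{R}^n$ $$\dot\theta=-\beta(\theta-\vartheta)\mathcal{N}_t,\qquad \dot\vartheta=-\gamma\,\phi(t)\phi^T(t)(\theta-\theta^* ).$$ Then the point $(\theta^*,\theta^* )$ is uniformly globally asymptotically stable for this system. *)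

theory Defs
  imports "HOL-Analysis.Analysis"
begin

definition outer :: "real^'n \<Rightarrow> real^'n \<Rightarrow> real^'n^'n" where
  "outer v w = (\<chi> i j. v $ i * w $ j)"

definition mat_ge :: "real^'n^'n \<Rightarrow> real^'n^'n \<Rightarrow> bool" where
  "mat_ge A B \<longleftrightarrow> (\<forall>v. v \<bullet> ((A - B) *v v) \<ge> 0)"

definition piecewise_continuous_nonneg :: "(real \<Rightarrow> 'a::topological_space) \<Rightarrow> bool" where
  "piecewise_continuous_nonneg f \<longleftrightarrow>
     (\<forall>b\<ge>0. \<exists>S. finite S \<and> continuous_on ({0..b} - S) f \<and>
        (\<forall>s\<in>S. (s > 0 \<longrightarrow> (\<exists>l. (f \<longlongrightarrow> l) (at_left s))) \<and> (\<exists>l. (f \<longlongrightarrow> l) (at_right s))))"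

definition persistently_exciting :: "(real \<Rightarrow> real^'n) \<Rightarrow> bool" where
  "persistently_exciting \<phi> \<longleftrightarrow>
     (\<exists>M T \<delta>. M > 0 \<and> T > 0 \<and> \<delta> > 0 \<and> (\<forall>t\<ge>0. norm (\<phi> t) \<le> M) \<and>
        (\<forall>t\<ge>0. mat_ge (integral {t..t+T} (\<lambda>s. outer (\<phi> s) (\<phi> s))) (\<delta> *\<^sub>R mat 1)))"

text \<open>(Caratheodory) solution of x' = f(t,x) on [t0,\<infinity>): integral equation.\<close>
definition is_solution :: "(real \<Rightarrow> 'a::euclidean_space \<Rightarrow> 'a) \<Rightarrow> real \<Rightarrow> (real \<Rightarrow> 'a) \<Rightarrow> bool" where
  "is_solution f t0 x \<longleftrightarrow> (\<forall>t\<ge>t0. ((\<lambda>s. f s (x s)) has_integral (x t - x t0)) {t0..t})"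

definition class_K :: "(real \<Rightarrow> real) \<Rightarrow> bool" where
  "class_K \<alpha> \<longleftrightarrow> continuous_on {0..} \<alpha> \<and> \<alpha> 0 = 0 \<and> strict_mono_on {0..} \<alpha>"

definition class_KL :: "(real \<Rightarrow> real \<Rightarrow> real) \<Rightarrow> bool" where
  "class_KL \<beta> \<longleftrightarrow> continuous_on ({0..} \<times> {0..}) (\<lambda>(r,s). \<beta> r s) \<and>
     (\<forall>s\<ge>0. class_K (\<lambda>r. \<beta> r s)) \<and>
     (\<forall>r\<ge>0. antimono_on {0..} (\<beta> r) \<and> ((\<beta> r) \<longlongrightarrow> 0) at_top)"

definition UGAS :: "(real \<Rightarrow> 'a::euclidean_space \<Rightarrow> 'a) \<Rightarrow> 'a \<Rightarrow> bool" where
  "UGAS f xs \<longleftrightarrow> (\<exists>\<beta>. class_KL \<beta> \<and>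
     (\<forall>t0\<ge>0. \<forall>x. is_solution f t0 x \<longrightarrow>
        (\<forall>t\<ge>t0. norm (x t - xs) \<le> \<beta> (norm (x t0 - xs)) (t - t0))))"

end

theory Submission
  imports Defs
begin

text \<open>Write z = \<vartheta> - \<theta>* and w = \<theta> - \<vartheta>. Along solutions the function
  V = (|z|^2 + |w|^2) / \<gamma> decreases at rate at least 2 \<kappa> q, where q = (\<phi>^T z)^2 + |w|^2;
  the condition \<beta> \<ge> 2 \<gamma> / \<mu> is what lets the normalisation N_t absorb the cross term
  2 (\<phi>^T w)^2. Since the squared speed of the state is bounded by a multiple of q, over a
  window [t, t+T] the state moves by at most O(\<integral> q), and persistency of excitation then gives
  V(t) \<le> C \<integral>[t, t+T] q. Hence V loses a fixed fraction of its value on every window of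
  length T, which yields an exponential bound that is uniform in the initial time.\<close>

lemma norm_add_square_le:
  fixes x y :: "'a::real_normed_vector"
  shows "norm (x + y) ^ 2 \<le> 2 * norm x ^ 2 + 2 * norm y ^ 2"
proof -
  have "norm (x + y) ^ 2 \<le> (norm x + norm y) ^ 2"
    by (rule power_mono[OF norm_triangle_ineq]) simp
  also have "\<dots> \<le> 2 * norm x ^ 2 + 2 * norm y ^ 2"
    using zero_le_power2[of "norm x - norm y"] by (simp add: power2_eq_square algebra_simps)
  finally show ?thesis .
qed

lemma integrable_on_bounded_continuous_off_finite:
  fixes h :: "real \<Rightarrow> real"
  assumes "finite S" "continuous_on ({a..b} - S) h" "\<And>s. s \<in> {a..b} \<Longrightarrow> \<bar>h s\<bar> \<le> B"
  shows "h integrable_on {a..b}"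
proof -
  have "{a..b} - S \<in> sets lebesgue"
    using assms(1) by (simp add: sets.Diff finite_imp_closed borel_closed)
  then have "h measurable_on ({a..b} - S)"
    using assms(2) continuous_imp_measurable_on_sets_lebesgue measurable_on_iff_borel_measurable
    by blast
  then have "h measurable_on {a..b}"
    by (rule measurable_on_spike_set) (auto intro: negligible_finite[OF assms(1)] negligible_subset)
  then show ?thesis
    using assms(3)
    by (rule_tac measurable_bounded_by_integrable_imp_integrable_real[where g="\<lambda>_. B"])
      (auto simp: measurable_on_iff_borel_measurable)
qed

lemma integrable_on_continuous_comp_off_finite:
  fixes H :: "'a::euclidean_space \<Rightarrow> 'b::euclidean_space \<Rightarrow> real"
    and \<phi> :: "real \<Rightarrow> 'a" and x :: "real \<Rightarrow> 'b"
  assumes "finite S" "continuous_on ({a..b} - S) \<phi>" "\<And>s. s \<in> {a..b} \<Longrightarrow> norm (\<phi> s) \<le> M"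
    and "continuous_on {a..b} x" "continuous_on UNIV (\<lambda>y. H (fst y) (snd y))"
  shows "(\<lambda>s. H (\<phi> s) (x s)) integrable_on {a..b}"
proof -
  let ?K = "cball (0::'a) M \<times> x ` {a..b}"
  have "compact ?K"
    using assms(4) by (intro compact_Times compact_continuous_image) (auto simp: compact_cball)
  then have "compact ((\<lambda>y. H (fst y) (snd y)) ` ?K)"
    using assms(5) continuous_on_subset by (intro compact_continuous_image) blast+
  then obtain B where B: "\<And>y. y \<in> ?K \<Longrightarrow> norm (H (fst y) (snd y)) \<le> B"
    using compact_imp_bounded bounded_iff by (metis (no_types, lifting) image_eqI)
  show ?thesis
  proof (rule integrable_on_bounded_continuous_off_finite[OF assms(1), where B=B])
    have "continuous_on ({a..b} - S) (\<lambda>s. (\<phi> s, x s))"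
      using assms(2) continuous_on_subset[OF assms(4)] by (intro continuous_intros) auto
    then show "continuous_on ({a..b} - S) (\<lambda>s. H (\<phi> s) (x s))"
      using continuous_on_compose2[OF assms(5) _ subset_UNIV, of _ "\<lambda>s. (\<phi> s, x s)"] by auto
  next
    fix s assume "s \<in> {a..b}"
    then show "\<bar>H (\<phi> s) (x s)\<bar> \<le> B"
      using B[of "(\<phi> s, x s)"] assms(3) by auto
  qed
qed

lemma integral_square_le:
  fixes f :: "real \<Rightarrow> real"
  assumes "f integrable_on {a..b}" "(\<lambda>s. f s ^ 2) integrable_on {a..b}" "a \<le> b"
  shows "integral {a..b} f ^ 2 \<le> (b - a) * integral {a..b} (\<lambda>s. f s ^ 2)"
proof (cases "a = b")
  case True
  then show ?thesis by simp
next
  case False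
  then have ab: "b - a > 0" using assms(3) by simp
  define I where "I = integral {a..b} f"
  define J where "J = integral {a..b} (\<lambda>s. f s ^ 2)"
  define c where "c = I / (b - a)"
  have lin: "(\<lambda>s. 2 * c * f s) integrable_on {a..b}"
    using integrable_cmul[OF assms(1)] by (simp add: mult.assoc)
  have quad: "(\<lambda>s. f s ^ 2 - 2 * c * f s) integrable_on {a..b}"
    using assms(2) lin by (rule integrable_diff)
  \<comment> \<open>expand \<open>0 \<le> \<integral>(f - c)\<^sup>2\<close> with \<open>c\<close> the mean value of \<open>f\<close>\<close>
  have "0 \<le> integral {a..b} (\<lambda>s. f s ^ 2 - 2 * c * f s + c ^ 2)"
  proof (rule integral_nonneg[OF integrable_add[OF quad integrable_const_ivl]])
    fix s
    have "0 \<le> (f s - c) ^ 2" by simp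
    then show "0 \<le> f s ^ 2 - 2 * c * f s + c ^ 2"
      by (simp add: power2_diff mult_ac)
  qed
  also have "\<dots> = J - 2 * c * I + c ^ 2 * (b - a)"
    using integral_add[OF quad integrable_const_ivl[of "c ^ 2" a b]]
      integral_diff[OF assms(2) lin] assms(3)
    by (simp add: I_def J_def)
  finally have "0 \<le> (b - a) * (J - 2 * c * I + c ^ 2 * (b - a))"
    using ab by simp
  also have "\<dots> = (b - a) * J - 2 * (c * (b - a)) * I + (c * (b - a)) ^ 2"
    by (simp add: algebra_simps power2_eq_square)
  also have "\<dots> = (b - a) * J - I ^ 2"
    using ab by (simp add: c_def power2_eq_square)
  finally show ?thesis by (simp add: I_def J_def)
qed

lemma integral_le_affine:
  fixes g q :: "real \<Rightarrow> real"
  assumes "g integrable_on {a..b}" "q integrable_on {a..b}" "a \<le> b"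
    and "\<And>s. s \<in> {a..b} \<Longrightarrow> g s \<le> k * q s + c"
  shows "integral {a..b} g \<le> k * integral {a..b} q + (b - a) * c"
proof -
  have "((\<lambda>s. k * q s + c) has_integral (k * integral {a..b} q + (b - a) * c)) {a..b}"
    using has_integral_add[OF has_integral_mult_right[OF integrable_integral[OF assms(2)]]
        has_integral_const_real[of c a b]] assms(3)
    by simp
  then show ?thesis
    using has_integral_le[OF integrable_integral[OF assms(1)]] assms(4) by blast
qed

lemma increment_square_le:
  fixes h y :: "real \<Rightarrow> 'a::euclidean_space" and q :: "real \<Rightarrow> real"
  assumes h: "\<And>s. s \<in> {t..t+T} \<Longrightarrow> (h has_integral (y s - y t)) {t..s}"
    and norm_int: "(\<lambda>r. norm (h r)) integrable_on {t..t+T}"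
    and norm_sq_int: "(\<lambda>r. norm (h r) ^ 2) integrable_on {t..t+T}"
    and q_int: "q integrable_on {t..t+T}"
    and hq: "\<And>r. r \<in> {t..t+T} \<Longrightarrow> norm (h r) ^ 2 \<le> C * q r"
    and q_nonneg: "\<And>r. r \<in> {t..t+T} \<Longrightarrow> 0 \<le> q r"
    and "C \<ge> 0" and s: "s \<in> {t..t+T}"
  shows "norm (y s - y t) ^ 2 \<le> T * C * integral {t..t+T} q"
proof -
  have sub: "{t..s} \<subseteq> {t..t+T}" using s by auto
  have hs: "(h has_integral (y s - y t)) {t..s}" using h s by blast
  have n1: "(\<lambda>r. norm (h r)) integrable_on {t..s}" by (rule integrable_on_subinterval[OF norm_int sub])
  have n2: "(\<lambda>r. norm (h r) ^ 2) integrable_on {t..s}"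
    by (rule integrable_on_subinterval[OF norm_sq_int sub])
  have qs: "q integrable_on {t..s}" by (rule integrable_on_subinterval[OF q_int sub])
  have "norm (y s - y t) \<le> integral {t..s} (\<lambda>r. norm (h r))"
    using integral_norm_bound_integral[OF has_integral_integrable[OF hs] n1] integral_unique[OF hs]
    by simp
  then have "norm (y s - y t) ^ 2 \<le> integral {t..s} (\<lambda>r. norm (h r)) ^ 2"
    by (rule power_mono) simp
  also have "\<dots> \<le> (s - t) * integral {t..s} (\<lambda>r. norm (h r) ^ 2)"
    using integral_square_le[OF n1 n2] s by simp
  also have "\<dots> \<le> T * (C * integral {t..t+T} q)"
  proof (rule mult_mono)
    have "integral {t..s} (\<lambda>r. norm (h r) ^ 2) \<le> integral {t..s} (\<lambda>r. C * q r)"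
      by (rule integral_le[OF n2]) (use hq sub integrable_on_mult_right[OF qs] in auto)
    also have "\<dots> \<le> C * integral {t..t+T} q"
      using integral_subset_le[OF sub qs q_int] q_nonneg \<open>C \<ge> 0\<close> by (simp add: mult_left_mono)
    finally show "integral {t..s} (\<lambda>r. norm (h r) ^ 2) \<le> C * integral {t..t+T} q" .
  qed (use s in \<open>auto intro: integral_nonneg[OF n2]\<close>)
  finally show ?thesis by (simp add: mult.assoc)
qed

lemma is_solution_later:
  assumes sol: "is_solution f t0 x" and "t0 \<le> a"
  shows "is_solution f a x"
  unfolding is_solution_def
proof (intro allI impI)
  fix t assume "a \<le> t"
  let ?g = "\<lambda>s. f s (x s)"
  have ht: "(?g has_integral (x t - x t0)) {t0..t}" and ha: "(?g has_integral (x a - x t0)) {t0..a}"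
    using sol \<open>t0 \<le> a\<close> \<open>a \<le> t\<close> unfolding is_solution_def by auto
  have "integral {t0..a} ?g + integral {a..t} ?g = integral {t0..t} ?g"
    using \<open>t0 \<le> a\<close> \<open>a \<le> t\<close> has_integral_integrable[OF ht] by (intro Henstock_Kurzweil_Integration.integral_combine) auto
  then have "integral {a..t} ?g = x t - x a"
    using integral_unique[OF ht] integral_unique[OF ha] by (simp add: algebra_simps)
  moreover have "?g integrable_on {a..t}"
    using \<open>t0 \<le> a\<close> by (intro integrable_on_subinterval[OF has_integral_integrable[OF ht]]) auto
  ultimately show "(?g has_integral (x t - x a)) {a..t}"
    using integrable_integral by metis
qed

lemma is_solution_eq_integral:
  assumes "is_solution f a x" "a \<le> t"
  shows "x t = x a + integral {a..t} (\<lambda>s. f s (x s))"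
proof -
  have "((\<lambda>s. f s (x s)) has_integral (x t - x a)) {a..t}"
    using assms unfolding is_solution_def by blast
  then show ?thesis by (simp add: integral_unique)
qed

lemma is_solution_continuous_on:
  assumes sol: "is_solution f a x" and "a \<le> b"
  shows "continuous_on {a..b} x"
proof -
  have "(\<lambda>s. f s (x s)) integrable_on {a..b}"
    using sol \<open>a \<le> b\<close> unfolding is_solution_def by blast
  then have "continuous_on {a..b} (\<lambda>t. x a + integral {a..t} (\<lambda>s. f s (x s)))"
    by (intro continuous_on_add continuous_on_const indefinite_integral_continuous_1)
  then show ?thesis
    by (rule continuous_on_eq) (metis atLeastAtMost_iff is_solution_eq_integral[OF sol])
qed

lemma is_solution_isCont:
  assumes "is_solution f a x" "a < s"
  shows "isCont x s"
  using is_solution_continuous_on[OF assms(1), of "s + 1"] assms(2)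
    continuous_on_interior[of "{a..s+1}" x s] by auto

lemma is_solution_has_vector_derivative:
  assumes sol: "is_solution f a x" and s: "a < s" and cont: "isCont (\<lambda>r. f r (x r)) s"
  shows "(x has_vector_derivative f s (x s)) (at s)"
proof -
  let ?g = "\<lambda>r. f r (x r)"
  have "(?g has_integral (x (s + 1) - x a)) {a..s+1}"
    using sol s unfolding is_solution_def by simp
  moreover have "continuous (at s within ({a..s+1} - {})) ?g"
    using cont by (simp add: continuous_at_imp_continuous_at_within)
  ultimately have "((\<lambda>u. integral {a..u} ?g) has_vector_derivative ?g s) (at s within ({a..s+1} - {}))"
    using s by (intro integral_has_vector_derivative_continuous_at has_integral_integrable) auto
  then have "((\<lambda>u. integral {a..u} ?g) has_vector_derivative ?g s) (at s)"
    using s by (simp add: at_within_Icc_at)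
  then have "((\<lambda>u. x a + integral {a..u} ?g) has_vector_derivative ?g s) (at s)"
    using has_vector_derivative_add[OF has_vector_derivative_const[of "x a"]] by fastforce
  then show ?thesis
  proof (rule has_vector_derivative_transform_within_open[where S="{a<..<s+1}"])
    fix y assume "y \<in> {a<..<s+1}"
    then show "x a + integral {a..y} ?g = x y"
      using is_solution_eq_integral[OF sol, of y] by simp
  qed (use s in auto)
qed

lemma piecewise_continuous_nonneg_obtain:
  assumes "piecewise_continuous_nonneg \<phi>" "b \<ge> 0"
  obtains S where "finite S" "continuous_on ({0..b} - S) \<phi>"
    "\<And>s. s \<in> {0<..<b} - S \<Longrightarrow> isCont \<phi> s"
proof -
  obtain S where S: "finite S" "continuous_on ({0..b} - S) \<phi>"
    using assms unfolding piecewise_continuous_nonneg_def by blast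
  have "open ({0<..<b} - S)"
    using S(1) by (intro open_Diff finite_imp_closed) auto
  moreover have "continuous_on ({0<..<b} - S) \<phi>"
    by (rule continuous_on_subset[OF S(2)]) auto
  ultimately have "isCont \<phi> s" if "s \<in> {0<..<b} - S" for s
    using that continuous_on_eq_continuous_at by blast
  with S that show ?thesis by blast
qed

lemma outer_self_mult_vec: "outer a a *v v = (a \<bullet> v) *\<^sub>R (a::real^'n)"
  by (simp add: vec_eq_iff matrix_vector_mult_def outer_def inner_vec_def sum_distrib_left mult_ac)

lemma mat_ge_integral_outer:
  fixes \<phi> :: "real \<Rightarrow> real^'n"
  assumes ge: "mat_ge (integral S (\<lambda>s. outer (\<phi> s) (\<phi> s))) (\<delta> *\<^sub>R mat 1)" and "\<delta> > 0"
  shows "(\<lambda>s. (\<phi> s \<bullet> v) ^ 2) integrable_on S"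
    and "\<delta> * (v \<bullet> v) \<le> integral S (\<lambda>s. (\<phi> s \<bullet> v) ^ 2)"
proof -
  let ?O = "\<lambda>s. outer (\<phi> s) (\<phi> s)"
  have O_int: "?O integrable_on S"
  proof (rule ccontr)
    assume "\<not> ?O integrable_on S"
    then have "mat_ge 0 (\<delta> *\<^sub>R (mat 1 :: real^'n^'n))"
      using ge not_integrable_integral by metis
    then have "(axis i 1 :: real^'n) \<bullet> ((- \<delta>) *\<^sub>R axis i 1) \<ge> 0" for i
      unfolding mat_ge_def
      by (metis diff_0 scaleR_minus_left scaleR_matrix_vector_assoc matrix_vector_mul_lid)
    then show False using \<open>\<delta> > 0\<close> by simp
  qed
  define L where "L A = v \<bullet> (A *v v)" for A :: "real^'n^'n"
  have "bounded_linear L"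
    unfolding L_def linear_conv_bounded_linear[symmetric] linear_iff
    by (simp add: matrix_vector_mult_add_rdistrib inner_add_right scaleR_matrix_vector_assoc[symmetric])
  moreover have L_O: "L \<circ> ?O = (\<lambda>s. (\<phi> s \<bullet> v) ^ 2)"
    by (simp add: L_def o_def outer_self_mult_vec fun_eq_iff inner_commute power2_eq_square)
  ultimately show "(\<lambda>s. (\<phi> s \<bullet> v) ^ 2) integrable_on S"
    using integrable_linear[OF O_int] by metis
  have I: "integral S (\<lambda>s. (\<phi> s \<bullet> v) ^ 2) = L (integral S ?O)"
    using integral_linear[OF O_int \<open>bounded_linear L\<close>] L_O by simp
  have "v \<bullet> ((integral S ?O - \<delta> *\<^sub>R mat 1) *v v) \<ge> 0"
    using ge by (simp add: mat_ge_def)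
  then show "\<delta> * (v \<bullet> v) \<le> integral S (\<lambda>s. (\<phi> s \<bullet> v) ^ 2)"
    by (simp add: I L_def matrix_vector_mult_diff_rdistrib inner_diff_right
        scaleR_matrix_vector_assoc[symmetric])
qed

lemma class_KL_exp:
  fixes K l :: real
  assumes K: "K > 0" and l: "l > 0"
  shows "class_KL (\<lambda>r s. K * r * exp (- l * s))"
  unfolding class_KL_def class_K_def
proof (intro conjI allI impI)
  have "(\<lambda>(r, s). K * r * exp (- l * s)) = (\<lambda>y. K * fst y * exp (- l * snd y))"
    by (auto simp: fun_eq_iff)
  moreover have "continuous_on ({0..} \<times> {0..}) (\<lambda>y::real \<times> real. K * fst y * exp (- l * snd y))"
    by (intro continuous_intros)
  ultimately show "continuous_on ({0..} \<times> {0..}) (\<lambda>(r, s). K * r * exp (- l * s))" by simp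
  fix s :: real
  show "continuous_on {0..} (\<lambda>r. K * r * exp (- l * s))" by (intro continuous_intros)
  show "K * 0 * exp (- l * s) = 0" by simp
  show "strict_mono_on {0..} (\<lambda>r. K * r * exp (- l * s))"
    unfolding strict_mono_on_def using K by (auto intro!: mult_strict_right_mono)
next
  fix r :: real assume r: "0 \<le> r"
  show "antimono_on {0..} (\<lambda>s. K * r * exp (- l * s))"
    unfolding monotone_on_def using K r l by (auto intro!: mult_left_mono)
  have "LIM s at_top. (- l) * s :> at_bot"
    by (rule filterlim_tendsto_neg_mult_at_bot[OF tendsto_const]) (use l in \<open>auto intro: filterlim_ident\<close>)
  then have "((\<lambda>s. exp ((- l) * s)) \<longlongrightarrow> 0) at_top"
    by (rule filterlim_compose[OF exp_at_bot])
  then have "((\<lambda>s. K * r * exp ((- l) * s)) \<longlongrightarrow> K * r * 0) at_top"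
    by (intro tendsto_intros)
  then show "((\<lambda>s. K * r * exp (- l * s)) \<longlongrightarrow> 0) at_top" by simp
qed

lemma window_contraction_imp_exp_decay:
  fixes V :: "real \<Rightarrow> real"
  assumes \<rho>: "0 < \<rho>" "\<rho> \<le> 1" and "T > 0"
    and contract: "\<And>s. t0 \<le> s \<Longrightarrow> V (s + T) \<le> \<rho> * V s"
    and antimono: "\<And>a b. t0 \<le> a \<Longrightarrow> a \<le> b \<Longrightarrow> V b \<le> V a"
    and "V t0 \<ge> 0" and "t0 \<le> t"
  shows "V t \<le> V t0 / \<rho> * exp (ln \<rho> * (t - t0) / T)"
proof -
  have iter: "V (t0 + real k * T) \<le> \<rho> ^ k * V t0" for k
  proof (induction k)
    case (Suc k)
    have "V (t0 + real (Suc k) * T) \<le> \<rho> * V (t0 + real k * T)"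
      using contract[of "t0 + real k * T"] \<open>T > 0\<close> by (simp add: algebra_simps)
    also have "\<dots> \<le> \<rho> * (\<rho> ^ k * V t0)"
      using Suc \<rho> by (intro mult_left_mono) auto
    finally show ?case by simp
  qed simp
  define k where "k = nat \<lfloor>(t - t0) / T\<rfloor>"
  have "real k \<le> (t - t0) / T" and k_ge: "(t - t0) / T - 1 \<le> real k"
    using \<open>t0 \<le> t\<close> \<open>T > 0\<close> by (simp_all add: k_def)
  then have k_le: "real k * T \<le> t - t0"
    using \<open>T > 0\<close> by (simp add: pos_le_divide_eq)
  have "\<rho> ^ k = exp (real k * ln \<rho>)"
    using \<rho> by (simp add: exp_of_nat_mult)
  also have "\<dots> \<le> exp (((t - t0) / T - 1) * ln \<rho>)"
    using \<rho> k_ge by (simp add: mult_right_mono_neg)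
  also have "\<dots> = exp (ln \<rho> * (t - t0) / T) / \<rho>"
    using \<rho> by (simp add: exp_diff algebra_simps)
  finally have \<rho>_pow: "\<rho> ^ k \<le> exp (ln \<rho> * (t - t0) / T) / \<rho>" .
  have "V t \<le> V (t0 + real k * T)"
    using antimono k_le \<open>T > 0\<close> by simp
  also have "\<dots> \<le> \<rho> ^ k * V t0" by (rule iter)
  also have "\<dots> \<le> exp (ln \<rho> * (t - t0) / T) / \<rho> * V t0"
    using \<rho>_pow \<open>V t0 \<ge> 0\<close> by (rule mult_right_mono)
  finally show ?thesis by (simp add: mult.commute)
qed

locale pe_estimator =
  fixes \<phi> :: "real \<Rightarrow> real^'n" and \<theta>s :: "real^'n" and \<beta> \<gamma> \<mu> M T \<delta> :: real
  assumes pc: "piecewise_continuous_nonneg \<phi>"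
    and \<phi>_bound: "\<And>t. t \<ge> 0 \<Longrightarrow> norm (\<phi> t) \<le> M"
    and T_pos: "T > 0" and \<delta>_pos: "\<delta> > 0"
    and pe: "\<And>t. t \<ge> 0 \<Longrightarrow> mat_ge (integral {t..t+T} (\<lambda>s. outer (\<phi> s) (\<phi> s))) (\<delta> *\<^sub>R mat 1)"
    and \<beta>_pos: "\<beta> > 0" and \<gamma>_pos: "\<gamma> > 0" and \<mu>_pos: "\<mu> > 0" and \<beta>_ge: "\<beta> \<ge> 2 * \<gamma> / \<mu>"
begin

definition vf :: "real^'n \<Rightarrow> (real^'n) \<times> (real^'n) \<Rightarrow> (real^'n) \<times> (real^'n)" where
  "vf u p = (- (\<beta> * (1 + \<mu> * (u \<bullet> u))) *\<^sub>R (fst p - snd p), - (\<gamma> * (u \<bullet> (fst p - \<theta>s))) *\<^sub>R u)"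

definition F :: "real \<Rightarrow> (real^'n) \<times> (real^'n) \<Rightarrow> (real^'n) \<times> (real^'n)" where
  "F t p = vf (\<phi> t) p"

definition V :: "(real^'n) \<times> (real^'n) \<Rightarrow> real" where
  "V p = ((snd p - \<theta>s) \<bullet> (snd p - \<theta>s) + (fst p - snd p) \<bullet> (fst p - snd p)) / \<gamma>"

definition dV :: "(real^'n) \<times> (real^'n) \<Rightarrow> (real^'n) \<times> (real^'n) \<Rightarrow> real" where
  "dV p d = (2 * ((snd p - \<theta>s) \<bullet> snd d) + 2 * ((fst p - snd p) \<bullet> (fst d - snd d))) / \<gamma>"

definition dissipation :: "real^'n \<Rightarrow> (real^'n) \<times> (real^'n) \<Rightarrow> real" where
  "dissipation u p = (u \<bullet> (snd p - \<theta>s)) ^ 2 + (fst p - snd p) \<bullet> (fst p - snd p)"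

definition \<kappa> :: real where
  "\<kappa> = min 1 (\<beta> / \<gamma>)"

lemma \<kappa>_pos: "\<kappa> > 0"
  using \<beta>_pos \<gamma>_pos by (simp add: \<kappa>_def)

lemma V_nonneg: "V p \<ge> 0"
  using \<gamma>_pos by (simp add: V_def)

lemma dissipation_nonneg: "dissipation u p \<ge> 0"
  by (simp add: dissipation_def)

lemma continuous_on_dissipation: "continuous_on UNIV (\<lambda>y. dissipation (fst y) (snd y))"
  unfolding dissipation_def by (intro continuous_intros)

lemma continuous_on_vf: "continuous_on UNIV (\<lambda>y. vf (fst y) (snd y))"
  unfolding vf_def by (intro continuous_intros)

lemma dV_vf:
  "dV p (vf u p) = - 2 * (u \<bullet> (snd p - \<theta>s)) ^ 2 + 2 * (u \<bullet> (fst p - snd p)) ^ 2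
     - 2 * (\<beta> / \<gamma>) * (1 + \<mu> * (u \<bullet> u)) * ((fst p - snd p) \<bullet> (fst p - snd p))"
proof -
  define z w where "z = snd p - \<theta>s" and "w = fst p - snd p"
  define A B N where "A = u \<bullet> z" and "B = u \<bullet> w" and "N = 1 + \<mu> * (u \<bullet> u)"
  have AB: "u \<bullet> (fst p - \<theta>s) = A + B"
    by (simp add: A_def B_def z_def w_def flip: inner_add_right)
  have "z \<bullet> snd (vf u p) = - (\<gamma> * (A + B)) * A"
    by (simp add: vf_def AB A_def inner_commute[of z u])
  moreover have "fst (vf u p) - snd (vf u p) = (- (\<beta> * N)) *\<^sub>R w + (\<gamma> * (A + B)) *\<^sub>R u"
    by (simp add: vf_def AB flip: w_def N_def)
  then have "w \<bullet> (fst (vf u p) - snd (vf u p)) = - (\<beta> * N) * (w \<bullet> w) + \<gamma> * (A + B) * B"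
    by (simp add: inner_diff_right B_def inner_commute[of w u])
  ultimately have "dV p (vf u p) = (2 * (- (\<gamma> * (A + B)) * A) + 2 * (- (\<beta> * N) * (w \<bullet> w) + \<gamma> * (A + B) * B)) / \<gamma>"
    by (simp add: dV_def flip: z_def w_def)
  also have "\<dots> = - 2 * A ^ 2 + 2 * B ^ 2 - 2 * (\<beta> / \<gamma>) * N * (w \<bullet> w)"
    using \<gamma>_pos by (simp add: field_simps power2_eq_square)
  finally show ?thesis by (simp add: A_def B_def N_def z_def w_def)
qed

text \<open>Since (u \<bullet> w)^2 \<le> |u|^2 |w|^2 and \<beta> \<mu> / \<gamma> \<ge> 2, the damping term proportional to
  \<mu> |u|^2 |w|^2 absorbs the indefinite term 2 (u \<bullet> w)^2.\<close>

lemma dV_vf_le: "dV p (vf u p) \<le> - 2 * \<kappa> * dissipation u p"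
proof -
  define A B W U where "A = u \<bullet> (snd p - \<theta>s)" and "B = u \<bullet> (fst p - snd p)"
    and "W = (fst p - snd p) \<bullet> (fst p - snd p)" and "U = u \<bullet> u"
  have "U \<ge> 0" "W \<ge> 0" by (simp_all add: U_def W_def)
  have B2: "B ^ 2 \<le> U * W"
    unfolding B_def U_def W_def by (rule Cauchy_Schwarz_ineq)
  have "2 \<le> \<beta> * \<mu> / \<gamma>"
    using \<beta>_ge \<mu>_pos \<gamma>_pos by (simp add: field_simps)
  then have "2 * (U * W) \<le> (\<beta> * \<mu> / \<gamma>) * (U * W)"
    using \<open>U \<ge> 0\<close> \<open>W \<ge> 0\<close> by (intro mult_right_mono) auto
  moreover have "(\<beta> / \<gamma>) * (1 + \<mu> * U) * W = (\<beta> / \<gamma>) * W + (\<beta> * \<mu> / \<gamma>) * (U * W)"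
    by (simp add: algebra_simps)
  moreover have "dV p (vf u p) = - 2 * A ^ 2 + 2 * B ^ 2 - 2 * ((\<beta> / \<gamma>) * (1 + \<mu> * U) * W)"
    by (simp add: dV_vf A_def B_def U_def W_def)
  ultimately have "dV p (vf u p) \<le> - 2 * A ^ 2 - 2 * ((\<beta> / \<gamma>) * W)"
    using B2 mult_nonneg_nonneg[OF \<open>U \<ge> 0\<close> \<open>W \<ge> 0\<close>] by linarith
  also have "\<dots> \<le> - 2 * \<kappa> * (A ^ 2 + W)"
  proof -
    have "\<kappa> * A ^ 2 \<le> A ^ 2" "\<kappa> * W \<le> (\<beta> / \<gamma>) * W"
      using mult_right_mono[of \<kappa> 1 "A ^ 2"] mult_right_mono[OF _ \<open>W \<ge> 0\<close>, of \<kappa> "\<beta> / \<gamma>"]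
      by (simp_all add: \<kappa>_def)
    moreover have "- 2 * \<kappa> * (A ^ 2 + W) = - 2 * (\<kappa> * A ^ 2) - 2 * (\<kappa> * W)"
      by (simp add: algebra_simps)
    ultimately show ?thesis by linarith
  qed
  finally show ?thesis by (simp add: dissipation_def A_def W_def)
qed

lemma V_has_vector_derivative:
  assumes "(x has_vector_derivative d) (at s)"
  shows "((\<lambda>r. V (x r)) has_vector_derivative dV (x s) d) (at s)"
proof -
  have D: "(x has_derivative (\<lambda>h. h *\<^sub>R d)) (at s)"
    using assms by (simp add: has_vector_derivative_def)
  have "((\<lambda>r. V (x r)) has_derivative (\<lambda>h. h *\<^sub>R dV (x s) d)) (at s)"
    unfolding V_def dV_def using \<gamma>_pos
    by (auto intro!: derivative_eq_intros D
        simp: fun_eq_iff field_simps inner_diff_left inner_diff_right inner_commute)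
  then show ?thesis by (simp add: has_vector_derivative_def)
qed

lemma solution_has_vector_derivative:
  assumes sol: "is_solution F a x" and "a < s" and "isCont \<phi> s"
  shows "(x has_vector_derivative F s (x s)) (at s)"
proof (rule is_solution_has_vector_derivative[OF sol \<open>a < s\<close>])
  have "isCont x s" by (rule is_solution_isCont[OF sol \<open>a < s\<close>])
  with \<open>isCont \<phi> s\<close> show "isCont (\<lambda>r. F r (x r)) s"
    unfolding F_def vf_def by (intro continuous_intros)
qed

lemma integrable_along_solution:
  fixes H :: "real^'n \<Rightarrow> (real^'n) \<times> (real^'n) \<Rightarrow> real"
  assumes sol: "is_solution F t0 x" and "0 \<le> t0" "t0 \<le> a" "a \<le> b"
    and H: "continuous_on UNIV (\<lambda>y. H (fst y) (snd y))"
  shows "(\<lambda>s. H (\<phi> s) (x s)) integrable_on {a..b}"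
proof -
  obtain S where S: "finite S" "continuous_on ({0..b} - S) \<phi>"
    using piecewise_continuous_nonneg_obtain[OF pc, of b] assms by auto
  have "continuous_on ({a..b} - S) \<phi>"
    by (rule continuous_on_subset[OF S(2)]) (use assms in auto)
  moreover have "continuous_on {a..b} x"
    by (rule is_solution_continuous_on[OF is_solution_later[OF sol \<open>t0 \<le> a\<close>] \<open>a \<le> b\<close>])
  ultimately show ?thesis
    using \<phi>_bound assms by (intro integrable_on_continuous_comp_off_finite[OF S(1) _ _ _ H, where M=M]) auto
qed

lemma V_dissipation:
  assumes sol: "is_solution F t0 x" and "0 \<le> t0" "t0 \<le> a" "a \<le> b"
  shows "V (x b) + 2 * \<kappa> * integral {a..b} (\<lambda>s. dissipation (\<phi> s) (x s)) \<le> V (x a)"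
proof -
  let ?q = "\<lambda>s. dissipation (\<phi> s) (x s)"
  obtain S where S: "finite S" "\<And>s. s \<in> {0<..<b} - S \<Longrightarrow> isCont \<phi> s"
    using piecewise_continuous_nonneg_obtain[OF pc, of b] assms by auto
  have "((\<lambda>r. V (x r)) has_vector_derivative dV (x s) (vf (\<phi> s) (x s))) (at s)"
    if "s \<in> {a<..<b} - S" for s
    using that assms S(2)[of s]
    by (auto intro!: V_has_vector_derivative
        solution_has_vector_derivative[OF sol, of s, unfolded F_def])
  moreover have "continuous_on {a..b} (\<lambda>r. V (x r))"
    using is_solution_continuous_on[OF is_solution_later[OF sol \<open>t0 \<le> a\<close>] \<open>a \<le> b\<close>]
    unfolding V_def using \<gamma>_pos by (intro continuous_intros) auto
  ultimately have "((\<lambda>s. dV (x s) (vf (\<phi> s) (x s))) has_integral (V (x b) - V (x a))) {a..b}"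
    by (intro fundamental_theorem_of_calculus_interior_strong[OF S(1) \<open>a \<le> b\<close>])
  moreover have "((\<lambda>s. (- 2 * \<kappa>) * ?q s) has_integral ((- 2 * \<kappa>) * integral {a..b} ?q)) {a..b}"
    using integrable_along_solution[OF assms continuous_on_dissipation]
    by (intro has_integral_mult_right integrable_integral)
  ultimately have "V (x b) - V (x a) \<le> (- 2 * \<kappa>) * integral {a..b} ?q"
    by (rule has_integral_le) (use dV_vf_le in simp)
  then show ?thesis by simp
qed

lemma V_antimono:
  assumes sol: "is_solution F t0 x" and "0 \<le> t0" "t0 \<le> a" "a \<le> b"
  shows "V (x b) \<le> V (x a)"
proof -
  have "0 \<le> integral {a..b} (\<lambda>s. dissipation (\<phi> s) (x s))"
    by (rule integral_nonneg[OF integrable_along_solution[OF assms continuous_on_dissipation]])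
      (rule dissipation_nonneg)
  then show ?thesis
    using V_dissipation[OF assms] \<kappa>_pos by (smt (verit) mult_nonneg_nonneg)
qed

definition Cz :: real where
  "Cz = 2 * \<gamma>^2 * M^2 * (1 + M^2)"

definition Cw :: real where
  "Cw = 2 * \<beta>^2 * (1 + \<mu> * M^2)^2 + 2 * Cz"

lemma Cz_nonneg: "Cz \<ge> 0"
  by (simp add: Cz_def)

lemma Cw_nonneg: "Cw \<ge> 0"
  using Cz_nonneg by (simp add: Cw_def)

lemma norm_snd_vf_le:
  assumes "norm u \<le> M"
  shows "norm (snd (vf u p)) ^ 2 \<le> Cz * dissipation u p"
proof -
  define A B W where "A = u \<bullet> (snd p - \<theta>s)" and "B = u \<bullet> (fst p - snd p)"
    and "W = (fst p - snd p) \<bullet> (fst p - snd p)"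
  have "W \<ge> 0" by (simp add: W_def)
  have uu: "u \<bullet> u \<le> M^2"
    using assms by (simp add: power_mono flip: power2_norm_eq_inner)
  have "B^2 \<le> (u \<bullet> u) * W"
    unfolding B_def W_def by (rule Cauchy_Schwarz_ineq)
  also have "\<dots> \<le> M^2 * W"
    using uu \<open>W \<ge> 0\<close> by (rule mult_right_mono)
  finally have "B^2 \<le> M^2 * W" .
  moreover have "(A + B)^2 \<le> 2 * A^2 + 2 * B^2"
    using norm_add_square_le[of A B] by simp
  moreover have "0 \<le> M^2 * A^2" by simp
  moreover have "2 * (1 + M^2) * (A^2 + W) = 2 * A^2 + 2 * (M^2 * A^2) + 2 * W + 2 * (M^2 * W)"
    by (simp add: algebra_simps)
  ultimately have "(A + B)^2 \<le> 2 * (1 + M^2) * (A^2 + W)"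
    using \<open>W \<ge> 0\<close> by linarith
  have "norm (snd (vf u p)) ^ 2 = \<gamma>^2 * (A + B)^2 * (u \<bullet> u)"
    by (simp add: vf_def A_def B_def power_mult_distrib power2_norm_eq_inner inner_diff_right)
  also have "\<dots> \<le> \<gamma>^2 * (2 * (1 + M^2) * (A^2 + W)) * M^2"
    using \<open>(A + B)^2 \<le> 2 * (1 + M^2) * (A^2 + W)\<close> uu \<open>W \<ge> 0\<close>
    by (intro mult_mono mult_left_mono) auto
  also have "\<dots> = Cz * dissipation u p"
    by (simp add: Cz_def dissipation_def A_def W_def algebra_simps)
  finally show ?thesis .
qed

lemma norm_diff_vf_le:
  assumes "norm u \<le> M"
  shows "norm (fst (vf u p) - snd (vf u p)) ^ 2 \<le> Cw * dissipation u p"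
proof -
  define w N where "w = fst p - snd p" and "N = 1 + \<mu> * (u \<bullet> u)"
  have "0 \<le> \<beta> * N" "\<beta> * N \<le> \<beta> * (1 + \<mu> * M^2)"
    using assms \<beta>_pos \<mu>_pos by (simp_all add: N_def power_mono flip: power2_norm_eq_inner)
  then have "(\<beta> * N)^2 \<le> (\<beta> * (1 + \<mu> * M^2))^2"
    by (intro power_mono)
  then have lin: "(\<beta> * N)^2 * (w \<bullet> w) \<le> (\<beta> * (1 + \<mu> * M^2))^2 * dissipation u p"
    by (rule mult_mono) (auto simp: dissipation_def w_def)
  have "norm (fst (vf u p) - snd (vf u p)) ^ 2
      \<le> 2 * norm ((- (\<beta> * N)) *\<^sub>R w) ^ 2 + 2 * norm (- snd (vf u p)) ^ 2"
    using norm_add_square_le[of "(- (\<beta> * N)) *\<^sub>R w" "- snd (vf u p)"]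
    by (simp add: vf_def w_def N_def)
  also have "\<dots> = 2 * ((\<beta> * N)^2 * (w \<bullet> w)) + 2 * norm (snd (vf u p)) ^ 2"
    by (simp add: power_mult_distrib power2_norm_eq_inner)
  also have "\<dots> \<le> 2 * ((\<beta> * (1 + \<mu> * M^2))^2 * dissipation u p) + 2 * (Cz * dissipation u p)"
    using lin norm_snd_vf_le[OF assms, of p] by linarith
  also have "\<dots> = Cw * dissipation u p"
    unfolding Cw_def power_mult_distrib by (simp add: algebra_simps)
  finally show ?thesis .
qed


lemma increment_bound:
  fixes L :: "(real^'n) \<times> (real^'n) \<Rightarrow> real^'n"
  assumes sol: "is_solution F t0 x" and "0 \<le> t0" "t0 \<le> t" and s: "s \<in> {t..t+T}"
    and L: "bounded_linear L" and "C \<ge> 0"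
    and L_vf: "\<And>u p. norm u \<le> M \<Longrightarrow> norm (L (vf u p)) ^ 2 \<le> C * dissipation u p"
  shows "norm (L (x s) - L (x t)) ^ 2 \<le> T * C * integral {t..t+T} (\<lambda>r. dissipation (\<phi> r) (x r))"
proof (rule increment_square_le[where h="\<lambda>r. L (vf (\<phi> r) (x r))" and y="\<lambda>r. L (x r)"])
  have window: "0 \<le> t0" "t0 \<le> t" "t \<le> t + T"
    using assms T_pos by auto
  have cont: "continuous_on UNIV (\<lambda>y. L (vf (fst y) (snd y)))"
    using continuous_on_compose[OF continuous_on_vf linear_continuous_on[OF L]] by (simp add: o_def)
  show "(\<lambda>r. norm (L (vf (\<phi> r) (x r)))) integrable_on {t..t+T}"
    using integrable_along_solution[OF sol window continuous_on_norm[OF cont]] by simp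
  show "(\<lambda>r. norm (L (vf (\<phi> r) (x r))) ^ 2) integrable_on {t..t+T}"
    using integrable_along_solution[OF sol window continuous_on_power[OF continuous_on_norm[OF cont]]]
    by simp
  show "(\<lambda>r. dissipation (\<phi> r) (x r)) integrable_on {t..t+T}"
    by (rule integrable_along_solution[OF sol window continuous_on_dissipation])
  fix r assume r: "r \<in> {t..t+T}"
  have "((\<lambda>r. vf (\<phi> r) (x r)) has_integral (x r - x t)) {t..r}"
    using is_solution_later[OF sol \<open>t0 \<le> t\<close>] r unfolding is_solution_def F_def by auto
  from has_integral_linear[OF this L]
  show "((\<lambda>r. L (vf (\<phi> r) (x r))) has_integral (L (x r) - L (x t))) {t..r}"
    by (simp add: o_def linear_diff[OF bounded_linear.linear[OF L]])
  show "norm (L (vf (\<phi> r) (x r))) ^ 2 \<le> C * dissipation (\<phi> r) (x r)"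
    using L_vf \<phi>_bound r assms by simp
qed (use assms dissipation_nonneg in auto)

lemma z_window_bound:
  assumes sol: "is_solution F t0 x" and "0 \<le> t0" "t0 \<le> t"
  shows "\<delta> * ((snd (x t) - \<theta>s) \<bullet> (snd (x t) - \<theta>s))
    \<le> (2 + 2 * M^2 * T^2 * Cz) * integral {t..t+T} (\<lambda>s. dissipation (\<phi> s) (x s))"
proof -
  let ?q = "\<lambda>s. dissipation (\<phi> s) (x s)"
  define Q v where "Q = integral {t..t+T} ?q" and "v = snd (x t) - \<theta>s"
  have "(\<phi> s \<bullet> v)^2 \<le> 2 * ?q s + 2 * M^2 * T * Cz * Q" if s: "s \<in> {t..t+T}" for s
  proof -
    define d where "d = snd (x s) - snd (x t)"
    have "(\<phi> s \<bullet> d)^2 \<le> (\<phi> s \<bullet> \<phi> s) * (d \<bullet> d)"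
      by (rule Cauchy_Schwarz_ineq)
    also have "\<dots> \<le> M^2 * (T * Cz * Q)"
    proof (rule mult_mono)
      show "\<phi> s \<bullet> \<phi> s \<le> M^2"
        using \<phi>_bound[of s] s assms by (simp add: power_mono flip: power2_norm_eq_inner)
      show "d \<bullet> d \<le> T * Cz * Q"
        using increment_bound[OF sol assms(2,3) s bounded_linear_snd Cz_nonneg norm_snd_vf_le]
        by (simp add: d_def Q_def power2_norm_eq_inner)
    qed auto
    finally have "(\<phi> s \<bullet> d)^2 \<le> M^2 * (T * Cz * Q)" .
    moreover have "(\<phi> s \<bullet> v)^2 \<le> 2 * (\<phi> s \<bullet> (snd (x s) - \<theta>s))^2 + 2 * (\<phi> s \<bullet> d)^2"
      using norm_add_square_le[of "\<phi> s \<bullet> (snd (x s) - \<theta>s)" "- (\<phi> s \<bullet> d)"]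
      by (simp add: v_def d_def inner_diff_right power2_commute)
    moreover have "(\<phi> s \<bullet> (snd (x s) - \<theta>s))^2 \<le> ?q s"
      by (simp add: dissipation_def)
    ultimately show ?thesis by (simp add: algebra_simps)
  qed
  then have "integral {t..t+T} (\<lambda>s. (\<phi> s \<bullet> v)^2) \<le> 2 * Q + (t + T - t) * (2 * M^2 * T * Cz * Q)"
    unfolding Q_def using T_pos assms
    by (intro integral_le_affine mat_ge_integral_outer(1)[OF pe \<delta>_pos]
        integrable_along_solution[OF sol _ _ _ continuous_on_dissipation]) auto
  moreover have "\<delta> * (v \<bullet> v) \<le> integral {t..t+T} (\<lambda>s. (\<phi> s \<bullet> v)^2)"
    using assms by (intro mat_ge_integral_outer(2)[OF pe \<delta>_pos]) auto
  ultimately show ?thesis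
    by (simp add: v_def Q_def algebra_simps power2_eq_square)
qed

lemma w_window_bound:
  assumes sol: "is_solution F t0 x" and "0 \<le> t0" "t0 \<le> t"
  shows "T * ((fst (x t) - snd (x t)) \<bullet> (fst (x t) - snd (x t)))
    \<le> (2 + 2 * T^2 * Cw) * integral {t..t+T} (\<lambda>s. dissipation (\<phi> s) (x s))"
proof -
  let ?q = "\<lambda>s. dissipation (\<phi> s) (x s)"
  let ?w = "\<lambda>p :: (real^'n) \<times> (real^'n). fst p - snd p"
  define Q where "Q = integral {t..t+T} ?q"
  have "?w (x t) \<bullet> ?w (x t) \<le> 2 * ?q s + 2 * T * Cw * Q" if s: "s \<in> {t..t+T}" for s
  proof -
    have "?w (x t) \<bullet> ?w (x t) \<le> 2 * norm (?w (x s)) ^ 2 + 2 * norm (?w (x t) - ?w (x s)) ^ 2"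
      using norm_add_square_le[of "?w (x s)" "?w (x t) - ?w (x s)"]
      by (simp add: power2_norm_eq_inner)
    moreover have "norm (?w (x s)) ^ 2 \<le> ?q s"
      by (simp add: dissipation_def power2_norm_eq_inner)
    moreover have "norm (?w (x t) - ?w (x s)) ^ 2 \<le> T * Cw * Q"
      using increment_bound[OF sol assms(2,3) s bounded_linear_sub[OF bounded_linear_fst bounded_linear_snd]
          Cw_nonneg norm_diff_vf_le]
      by (simp add: Q_def norm_minus_commute)
    ultimately show ?thesis by simp
  qed
  then have "integral {t..t+T} (\<lambda>s. ?w (x t) \<bullet> ?w (x t)) \<le> 2 * Q + (t + T - t) * (2 * T * Cw * Q)"
    unfolding Q_def using T_pos assms
    by (intro integral_le_affine integrable_along_solution[OF sol _ _ _ continuous_on_dissipation]) auto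
  then show ?thesis
    using T_pos by (simp add: Q_def algebra_simps power2_eq_square)
qed

definition C_pe :: real where
  "C_pe = ((2 + 2 * M^2 * T^2 * Cz) / \<delta> + (2 + 2 * T^2 * Cw) / T) / \<gamma>"

lemma C_pe_pos: "C_pe > 0"
  using Cz_nonneg Cw_nonneg \<delta>_pos T_pos \<gamma>_pos
  by (simp add: C_pe_def add_pos_nonneg pos_add_strict)

lemma V_le_window_dissipation:
  assumes sol: "is_solution F t0 x" and "0 \<le> t0" "t0 \<le> t"
  shows "V (x t) \<le> C_pe * integral {t..t+T} (\<lambda>s. dissipation (\<phi> s) (x s))"
proof -
  define Q where "Q = integral {t..t+T} (\<lambda>s. dissipation (\<phi> s) (x s))"
  have "(snd (x t) - \<theta>s) \<bullet> (snd (x t) - \<theta>s) \<le> (2 + 2 * M^2 * T^2 * Cz) / \<delta> * Q"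
    using z_window_bound[OF assms] \<delta>_pos by (simp add: Q_def pos_le_divide_eq mult.commute)
  moreover have "(fst (x t) - snd (x t)) \<bullet> (fst (x t) - snd (x t)) \<le> (2 + 2 * T^2 * Cw) / T * Q"
    using w_window_bound[OF assms] T_pos by (simp add: Q_def pos_le_divide_eq mult.commute)
  ultimately have "V (x t) \<le> ((2 + 2 * M^2 * T^2 * Cz) / \<delta> * Q + (2 + 2 * T^2 * Cw) / T * Q) / \<gamma>"
    unfolding V_def using \<gamma>_pos by (intro divide_right_mono) auto
  also have "\<dots> = C_pe * Q"
    by (simp add: C_pe_def algebra_simps add_divide_distrib)
  finally show ?thesis by (simp add: Q_def)
qed

definition \<rho> :: real where
  "\<rho> = 1 - min (2 * \<kappa> / C_pe) (1/2)"

lemma \<rho>_bounds: "1/2 \<le> \<rho>" "\<rho> < 1"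
  using \<kappa>_pos C_pe_pos by (auto simp: \<rho>_def)

lemma V_window_contraction:
  assumes sol: "is_solution F t0 x" and "0 \<le> t0" "t0 \<le> t"
  shows "V (x (t + T)) \<le> \<rho> * V (x t)"
proof -
  define Q where "Q = integral {t..t+T} (\<lambda>s. dissipation (\<phi> s) (x s))"
  have "V (x (t + T)) + 2 * \<kappa> * Q \<le> V (x t)"
    using V_dissipation[OF sol assms(2,3)] T_pos by (simp add: Q_def)
  moreover have "2 * \<kappa> / C_pe * V (x t) \<le> 2 * \<kappa> * Q"
    using V_le_window_dissipation[OF assms] \<kappa>_pos C_pe_pos
    by (simp add: Q_def field_simps)
  moreover have "min (2 * \<kappa> / C_pe) (1/2) * V (x t) \<le> 2 * \<kappa> / C_pe * V (x t)"
    using V_nonneg by (intro mult_right_mono) auto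
  ultimately show ?thesis
    by (simp add: \<rho>_def left_diff_distrib)
qed

lemma V_exp_decay:
  assumes sol: "is_solution F t0 x" and "0 \<le> t0" "t0 \<le> t"
  shows "V (x t) \<le> V (x t0) / \<rho> * exp (ln \<rho> * (t - t0) / T)"
  using \<rho>_bounds T_pos V_nonneg assms
  by (intro window_contraction_imp_exp_decay[where V="\<lambda>s. V (x s)"]
      V_window_contraction[OF sol] V_antimono[OF sol]) auto

lemma norm_sq_le_V: "norm (p - (\<theta>s, \<theta>s)) ^ 2 \<le> 3 * \<gamma> * V p"
  and V_le_norm_sq: "\<gamma> * V p \<le> 3 * norm (p - (\<theta>s, \<theta>s)) ^ 2"
proof -
  define e z where "e = fst p - \<theta>s" and "z = snd p - \<theta>s"
  have n: "norm (p - (\<theta>s, \<theta>s)) ^ 2 = norm e ^ 2 + norm z ^ 2"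
    by (cases p) (simp add: norm_Pair e_def z_def)
  have V: "\<gamma> * V p = norm z ^ 2 + norm (e - z) ^ 2"
    using \<gamma>_pos by (simp add: V_def e_def z_def power2_norm_eq_inner)
  have "norm e ^ 2 + norm z ^ 2 \<le> 3 * (norm z ^ 2 + norm (e - z) ^ 2)"
    using norm_add_square_le[of "e - z" z] zero_le_power2[of "norm (e - z)"]
    by (simp only: diff_add_cancel) (smt (verit))
  then show "norm (p - (\<theta>s, \<theta>s)) ^ 2 \<le> 3 * \<gamma> * V p"
    using n V by (simp add: mult.assoc)
  have "norm z ^ 2 + norm (e - z) ^ 2 \<le> 3 * (norm e ^ 2 + norm z ^ 2)"
    using norm_add_square_le[of e "- z"] zero_le_power2[of "norm e"]
    by (simp only: diff_conv_add_uminus norm_minus_cancel) (smt (verit))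
  then show "\<gamma> * V p \<le> 3 * norm (p - (\<theta>s, \<theta>s)) ^ 2"
    using n V by simp
qed

definition rate :: real where
  "rate = - ln \<rho> / (2 * T)"

lemma rate_pos: "rate > 0"
  using \<rho>_bounds T_pos by (simp add: rate_def divide_neg_pos)

lemma solution_exp_bound:
  assumes sol: "is_solution F t0 x" and "0 \<le> t0" "t0 \<le> t"
  shows "norm (x t - (\<theta>s, \<theta>s)) \<le> 3 / sqrt \<rho> * norm (x t0 - (\<theta>s, \<theta>s)) * exp (- rate * (t - t0))"
proof -
  define E where "E = exp (- rate * (t - t0))"
  have \<rho>: "\<rho> > 0" using \<rho>_bounds by simp
  have "E^2 = exp (2 * (- rate * (t - t0)))"
    by (simp add: E_def power2_eq_square flip: exp_add)
  also have "2 * (- rate * (t - t0)) = ln \<rho> * (t - t0) / T"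
    using T_pos by (simp add: rate_def field_simps)
  finally have E2: "E^2 = exp (ln \<rho> * (t - t0) / T)" .
  have "norm (x t - (\<theta>s, \<theta>s)) ^ 2 \<le> 3 * \<gamma> * V (x t)"
    by (rule norm_sq_le_V)
  also have "\<dots> \<le> 3 * \<gamma> * (V (x t0) / \<rho> * E^2)"
    using V_exp_decay[OF assms] \<gamma>_pos unfolding E2 by (intro mult_left_mono) auto
  also have "\<dots> = 3 * (\<gamma> * V (x t0)) / \<rho> * E^2"
    by simp
  also have "\<dots> \<le> 3 * (3 * norm (x t0 - (\<theta>s, \<theta>s)) ^ 2) / \<rho> * E^2"
    using V_le_norm_sq \<rho> by (intro mult_right_mono divide_right_mono mult_left_mono) auto
  also have "\<dots> = (3 / sqrt \<rho> * norm (x t0 - (\<theta>s, \<theta>s)) * E) ^ 2"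
    using \<rho> by (simp add: power_mult_distrib power_divide)
  finally show ?thesis
    unfolding E_def by (rule power2_le_imp_le) (use \<rho> in simp)
qed

end


theorem theorem1:
  fixes \<phi> :: "real \<Rightarrow> real^'n" and \<theta>s :: "real^'n" and \<beta> \<gamma> \<mu> :: real
  assumes "piecewise_continuous_nonneg \<phi>"
    and "persistently_exciting \<phi>"
    and "\<beta> > 0" "\<gamma> > 0" "\<mu> > 0" "\<beta> \<ge> 2 * \<gamma> / \<mu>"
  shows "UGAS (\<lambda>t (\<theta>, \<theta>2).
            (- (\<beta> * (1 + \<mu> * (\<phi> t \<bullet> \<phi> t))) *\<^sub>R (\<theta> - \<theta>2),
             - \<gamma> *\<^sub>R (outer (\<phi> t) (\<phi> t) *v (\<theta> - \<theta>s))))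
          (\<theta>s, \<theta>s)"
proof -
  obtain M T \<delta> where "T > 0" "\<delta> > 0" "\<forall>t\<ge>0. norm (\<phi> t) \<le> M"
    "\<forall>t\<ge>0. mat_ge (integral {t..t+T} (\<lambda>s. outer (\<phi> s) (\<phi> s))) (\<delta> *\<^sub>R mat 1)"
    using assms(2) unfolding persistently_exciting_def by blast
  then interpret pe_estimator \<phi> \<theta>s \<beta> \<gamma> \<mu> M T \<delta>
    using assms by unfold_locales auto
  have "(\<lambda>t (\<theta>, \<theta>2).
            (- (\<beta> * (1 + \<mu> * (\<phi> t \<bullet> \<phi> t))) *\<^sub>R (\<theta> - \<theta>2),
             - \<gamma> *\<^sub>R (outer (\<phi> t) (\<phi> t) *v (\<theta> - \<theta>s)))) = F"
    by (auto simp: fun_eq_iff F_def vf_def outer_self_mult_vec)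
  then show ?thesis
    unfolding UGAS_def
  proof (intro exI conjI)
    show "class_KL (\<lambda>r s. 3 / sqrt \<rho> * r * exp (- rate * s))"
      using \<rho>_bounds rate_pos by (intro class_KL_exp) auto
  qed (use solution_exp_bound in auto)
qed

end
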